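(* Let $\mathfrak{P}$ be a nonempty compact set of probability distributions $P=(p_\omega)_{\omega\in\Omega}$ on $\Omega$ and $\Phi_A(\mathbf{x})=\max_{P\in\mathfrak{P}}\sum_{\omega\in\Omega}p_\omega Q_\omega(\mathbf{x})$. Let $\hat{\mathbf{x}}\in\mathcal{X}$, for each $\omega$ let $\hat{\mathbf{S}}^\omega$ be an optimal solution of the problem defining $Q_\omega(\hat{\mathbf{x}})$, and let $(\hat p_\omega)_{\omega\in\Omega}\in\arg\max_{P\in\mathfrak{P}}\sum_{\omega\in\Omega}p_\omega f^\omega(\hat{\mathbf{S}}^\omega)$. For each $\omega,q$ fix an ordering $\hat S^\omega_q=\{i^\omega_{q,1},\dots,i^\omega_{q,T^\omega_q}\}$ and for $1\le t\le T^\omega_q$ let $\hat{\mathbf{S}}^\omega_{q,(t)}=(\hat S^\omega_1,\dots,\hat S^\omega_{q-1},\{i^\omega_{q,1},\dots,i^\omega_{q,t-1}\},\emptyset,\dots,\emptyset)$. Then for every $\mathbf{x}\in\mathcal{X}$, $$\Phi_A(\mathbf{x})\;\ge\;\Phi_A(\hat{\mathbf{x}})-\sum_{q=1}^k\sum_{\omega\in\Omega}\sum_{t=1}^{T^\omega_q}\hat p_\omega\,\rho^\omega_{q,i^\omega_{q,t}}(\hat{\mathbf{S}}^\omega_{q,(t)})\,\xi^\omega_{i^\omega_{q,t}}\,x_{q,i^\omega_{q,t}}.$$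
   Context: Let $n,k$ be positive integers and $N=\{1,\dots,n\}$. $\mathbb{X}(N,k)$ denotes the set of $k$-tuples $\mathbf{S}=(S_1,\dots,S_k)$ of pairwise disjoint subsets of $N$; such a tuple is identified with $\mathbf{s}\in\{0,1\}^{kn}$ where $s_{q,i}=1$ iff $i\in S_q$. For $\mathbf{X},\mathbf{Y}\in\mathbb{X}(N,k)$ let $\mathbf{X}\sqcap\mathbf{Y}=(X_1\cap Y_1,\dots,X_k\cap Y_k)$ and $\mathbf{X}\sqcup\mathbf{Y}$ be the tuple whose $i$-th component is $(X_i\cup Y_i)\setminus\bigcup_{q\ne i}(X_q\cup Y_q)$. A function $f:\mathbb{X}(N,k)\to\mathbb{R}$ is $k$-submodular if $f(\mathbf{X})+f(\mathbf{Y})\ge f(\mathbf{X}\sqcap\mathbf{Y})+f(\mathbf{X}\sqcup\mathbf{Y})$ for all $\mathbf{X},\mathbf{Y}$, and monotone if $f(\mathbf{X})\le f(\mathbf{Y})$ whenever $X_q\subseteq Y_q$ for all $q$. $\boldsymbol{\emptyset}=(\emptyset,\dots,\emptyset)$. Given nonnegative integer budgets $A_1,\dots,A_k$ and $D_1,\dots,D_k$, the attacker's feasible set is $\mathcal{X}=\{\mathbf{x}\in\{0,1\}^{kn}:\sum_{i=1}^n x_{q,i}\le A_q\ \forall q,\ \sum_{q=1}^k x_{q,i}\le 1\ \forall i\in N\}$. Stochastic setting: $\Omega$ is a finite set of scenarios; for each $\omega\in\Omega$ we are given $\xi^\omega\in\{0,1\}^n$ and a monotone $k$-submodular function $f^\omega:\mathbb{X}(N,k)\to\mathbb{R}$,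 with marginal gains $\rho^\omega_{q,i}(\mathbf{X})=f^\omega(X_1,\dots,X_q\cup\{i\},\dots,X_k)-f^\omega(\mathbf{X})$ for $i\notin\bigcup_r X_r$. For $\mathbf{x}\in\mathcal{X}$, $Q_\omega(\mathbf{x})=\max\{f^\omega(\mathbf{S}):\mathbf{S}\in\mathbb{X}(N,k),\ s_{q,i}\le 1-x_{q,i}\xi^\omega_i\ \forall q,i,\ \sum_{i=1}^n s_{q,i}\le D_q\ \forall q\}$. *)

theory Defs
  imports "HOL-Analysis.Analysis"
begin

text \<open>A k-tuple (S_1,...,S_k) of pairwise disjoint subsets of N = {1..n} is represented
  as a function S :: nat \<Rightarrow> nat set with S q = {} for q outside {1..k}.\<close>

definition ktuples :: "nat \<Rightarrow> nat \<Rightarrow> (nat \<Rightarrow> nat set) set" where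
  "ktuples n k = {S. (\<forall>q. S q \<subseteq> {1..n}) \<and> (\<forall>q. q \<notin> {1..k} \<longrightarrow> S q = {}) \<and>
      (\<forall>q\<in>{1..k}. \<forall>r\<in>{1..k}. q \<noteq> r \<longrightarrow> S q \<inter> S r = {})}"

definition kmeet :: "(nat \<Rightarrow> nat set) \<Rightarrow> (nat \<Rightarrow> nat set) \<Rightarrow> (nat \<Rightarrow> nat set)" where
  "kmeet X Y = (\<lambda>q. X q \<inter> Y q)"

definition kjoin :: "nat \<Rightarrow> (nat \<Rightarrow> nat set) \<Rightarrow> (nat \<Rightarrow> nat set) \<Rightarrow> (nat \<Rightarrow> nat set)" where
  "kjoin k X Y = (\<lambda>q. if q \<in> {1..k}
      then (X q \<union> Y q) - (\<Union>r\<in>{1..k} - {q}. X r \<union> Y r) else {})"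

definition k_submodular :: "nat \<Rightarrow> nat \<Rightarrow> ((nat \<Rightarrow> nat set) \<Rightarrow> real) \<Rightarrow> bool" where
  "k_submodular n k f \<longleftrightarrow> (\<forall>X\<in>ktuples n k. \<forall>Y\<in>ktuples n k.
      f X + f Y \<ge> f (kmeet X Y) + f (kjoin k X Y))"

definition k_monotone :: "nat \<Rightarrow> nat \<Rightarrow> ((nat \<Rightarrow> nat set) \<Rightarrow> real) \<Rightarrow> bool" where
  "k_monotone n k f \<longleftrightarrow> (\<forall>X\<in>ktuples n k. \<forall>Y\<in>ktuples n k.
      (\<forall>q\<in>{1..k}. X q \<subseteq> Y q) \<longrightarrow> f X \<le> f Y)"

definition marg :: "((nat \<Rightarrow> nat set) \<Rightarrow> real) \<Rightarrow> nat \<Rightarrow> nat \<Rightarrow> (nat \<Rightarrow> nat set) \<Rightarrow> real" where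
  "marg f q i X = f (X(q := X q \<union> {i})) - f X"

definition ind :: "(nat \<Rightarrow> nat set) \<Rightarrow> nat \<Rightarrow> nat \<Rightarrow> real" where
  "ind x q i = (if i \<in> x q then 1 else 0)"

text \<open>Attacker's feasible set \<X> (x identified with a tuple of disjoint sets).\<close>
definition attack_set :: "nat \<Rightarrow> nat \<Rightarrow> (nat \<Rightarrow> nat) \<Rightarrow> (nat \<Rightarrow> nat set) set" where
  "attack_set n k A = {x \<in> ktuples n k. \<forall>q\<in>{1..k}. card (x q) \<le> A q}"

definition inner_feas :: "nat \<Rightarrow> nat \<Rightarrow> (nat \<Rightarrow> nat) \<Rightarrow> (nat \<Rightarrow> real) \<Rightarrow> (nat \<Rightarrow> nat set)
    \<Rightarrow> (nat \<Rightarrow> nat set) set" where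
  "inner_feas n k D \<xi> x = {S \<in> ktuples n k.
      (\<forall>q\<in>{1..k}. \<forall>i\<in>{1..n}. ind S q i \<le> 1 - ind x q i * \<xi> i) \<and>
      (\<forall>q\<in>{1..k}. card (S q) \<le> D q)}"

definition Qval :: "nat \<Rightarrow> nat \<Rightarrow> (nat \<Rightarrow> nat) \<Rightarrow> (nat \<Rightarrow> real) \<Rightarrow> ((nat \<Rightarrow> nat set) \<Rightarrow> real)
    \<Rightarrow> (nat \<Rightarrow> nat set) \<Rightarrow> real" where
  "Qval n k D \<xi> f x = Max (f ` inner_feas n k D \<xi> x)"

definition prob_dists :: "'w set \<Rightarrow> ('w \<Rightarrow> real) set" where
  "prob_dists \<Omega> = {p. (\<forall>w\<in>\<Omega>. p w \<ge> 0) \<and> (\<forall>w. w \<notin> \<Omega> \<longrightarrow> p w = 0) \<and> (\<Sum>w\<in>\<Omega>. p w) = 1}"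

text \<open>Phi_A(x) = max over P of expected Q; the max is attained by compactness, so it equals the Sup.\<close>
definition PhiA :: "'w set \<Rightarrow> ('w \<Rightarrow> real) set \<Rightarrow> ('w \<Rightarrow> (nat \<Rightarrow> nat set) \<Rightarrow> real)
    \<Rightarrow> (nat \<Rightarrow> nat set) \<Rightarrow> real" where
  "PhiA \<Omega> \<PP> Q x = (SUP p\<in>\<PP>. \<Sum>w\<in>\<Omega>. p w * Q w x)"

end

theory Submission
  imports Defs
begin

text \<open>Deleting the items attacked by \<open>x\<close> from an optimal defence \<open>S\<^sup>\<omega>\<close> of \<open>xhat\<close> yields a
  defence that is feasible against \<open>x\<close>. Its loss of value is telescoped along the prefix tuples
  \<open>S\<^sup>\<omega>\<^sub>q\<^sub>,\<^sub>(\<^sub>t\<^sub>)\<close> (\<open>prefix_tuple\<close>): adding the next item costs nothing if it is not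
  attacked, because by orthant submodularity its marginal gain on the stripped prefix is at
  least its gain on the prefix, and costs at most its gain on the prefix if it is attacked.
  Averaging with \<open>phat\<close>, which maximises the expected value of the optimal defences, gives the
  bound.\<close>

definition prefix_tuple ::
    "(nat \<Rightarrow> nat set) \<Rightarrow> (nat \<Rightarrow> nat \<Rightarrow> nat) \<Rightarrow> nat \<Rightarrow> nat \<Rightarrow> (nat \<Rightarrow> nat set)" where
  "prefix_tuple S idx q t = (\<lambda>r. if r < q then S r else if r = q then idx q ` {1..<t} else {})"

definition strip_attacked ::
    "(nat \<Rightarrow> nat set) \<Rightarrow> (nat \<Rightarrow> real) \<Rightarrow> (nat \<Rightarrow> nat set) \<Rightarrow> (nat \<Rightarrow> nat set)" where
  "strip_attacked x \<xi> S = (\<lambda>r. S r - {i. i \<in> x r \<and> \<xi> i = 1})"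

lemma finite_ktuples: "finite (ktuples n k)"
proof -
  let ?F = "{S. \<forall>q. (q \<in> {1..k} \<longrightarrow> S q \<in> Pow {1..n}) \<and> (q \<notin> {1..k} \<longrightarrow> S q = {})}"
  have "finite ?F" by (rule finite_set_of_finite_funs) auto
  moreover have "ktuples n k \<subseteq> ?F" unfolding ktuples_def by auto
  ultimately show ?thesis by (rule finite_subset[rotated])
qed

lemma ktuples_subset:
  assumes "Y \<in> ktuples n k" "\<And>r. X r \<subseteq> Y r"
  shows "X \<in> ktuples n k"
  using assms unfolding ktuples_def by blast

lemma k_submodular_marg_antimono:
  assumes sub: "k_submodular n k f" and Y: "Y \<in> ktuples n k" and XY: "\<And>r. X r \<subseteq> Y r"
    and q: "q \<in> {1..k}" and i: "i \<in> {1..n}" and i_free: "\<And>r. i \<notin> Y r"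
  shows "marg f q i Y \<le> marg f q i X"
proof -
  let ?X' = "X(q := X q \<union> {i})" and ?Y' = "Y(q := Y q \<union> {i})"
  have X: "X \<in> ktuples n k" using ktuples_subset[OF Y XY] .
  have X': "?X' \<in> ktuples n k" using X q i i_free XY unfolding ktuples_def by auto
  have Y': "?Y' \<in> ktuples n k" using Y q i i_free unfolding ktuples_def by auto
  have meet: "kmeet ?X' Y = X" using XY i_free unfolding kmeet_def by (auto simp: fun_eq_iff)
  have join: "kjoin k ?X' Y = ?Y'"
  proof
    fix r
    have union: "\<And>s. ?X' s \<union> Y s = ?Y' s" using XY by auto
    show "kjoin k ?X' Y r = ?Y' r"
    proof (cases "r \<in> {1..k}")
      case True
      have "\<forall>s\<in>{1..k} - {r}. ?Y' s \<inter> ?Y' r = {}"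
        using Y' True unfolding ktuples_def by blast
      then have "?Y' r - (\<Union>s\<in>{1..k} - {r}. ?Y' s) = ?Y' r" by blast
      then show ?thesis using True unfolding kjoin_def union by simp
    next
      case False
      then show ?thesis using Y q unfolding kjoin_def ktuples_def by auto
    qed
  qed
  have "f (kmeet ?X' Y) + f (kjoin k ?X' Y) \<le> f ?X' + f Y"
    using sub X' Y unfolding k_submodular_def by blast
  then show ?thesis using meet join unfolding marg_def by simp
qed

context
  fixes S :: "nat \<Rightarrow> nat set" and idx :: "nat \<Rightarrow> nat \<Rightarrow> nat" and q :: nat
  assumes bij: "bij_betw (idx q) {1..card (S q)} (S q)"
begin

lemma prefix_tuple_subset:
  assumes "t \<le> Suc (card (S q))"
  shows "prefix_tuple S idx q t r \<subseteq> S r"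
proof -
  have "idx q ` {1..<t} \<subseteq> idx q ` {1..card (S q)}" using assms by (intro image_mono) auto
  also have "\<dots> = S q" using bij by (rule bij_betw_imp_surj_on)
  finally show ?thesis unfolding prefix_tuple_def by simp
qed

lemma prefix_tuple_Suc:
  assumes "1 \<le> t"
  shows "prefix_tuple S idx q (Suc t)
           = (prefix_tuple S idx q t)(q := prefix_tuple S idx q t q \<union> {idx q t})"
  using assms by (auto simp: prefix_tuple_def fun_eq_iff atLeastLessThanSuc)

lemma prefix_tuple_block_end:
  "prefix_tuple S idx q (Suc (card (S q))) = prefix_tuple S idx (Suc q) 1"
proof
  fix r
  have "idx q ` {1..<Suc (card (S q))} = S q"
    using bij_betw_imp_surj_on[OF bij] by (simp add: atLeastLessThanSuc_atLeastAtMost)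
  then show "prefix_tuple S idx q (Suc (card (S q))) r = prefix_tuple S idx (Suc q) 1 r"
    by (cases r q rule: linorder_cases) (simp_all add: prefix_tuple_def)
qed

lemma idx_notin_prefix_tuple:
  assumes S: "S \<in> ktuples n k" and q: "q \<in> {1..k}" and t: "t \<in> {1..card (S q)}"
  shows "idx q t \<notin> prefix_tuple S idx q t r"
proof -
  have "idx q t \<in> S q" using bij_betw_apply[OF bij t] .
  moreover have "S q \<inter> S r = {}" if "r < q"
  proof (cases "r \<in> {1..k}")
    case True
    moreover have "q \<noteq> r" using that by simp
    ultimately show ?thesis using S q unfolding ktuples_def by simp
  next
    case False
    then show ?thesis using S unfolding ktuples_def by simp
  qed
  moreover have "idx q t \<notin> idx q ` {1..<t}"
  proof
    assume "idx q t \<in> idx q ` {1..<t}"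
    then obtain s where s: "idx q t = idx q s" "s \<in> {1..<t}" by (rule imageE)
    then have "s \<in> {1..card (S q)}" using t by simp
    then have "t = s" using inj_onD[OF bij_betw_imp_inj_on[OF bij] s(1) t] by simp
    then show False using s(2) by simp
  qed
  ultimately show ?thesis unfolding prefix_tuple_def by auto
qed

end

lemma prefix_tuple_first:
  "S \<in> ktuples n k \<Longrightarrow> prefix_tuple S idx 1 1 = (\<lambda>_. {})"
  by (auto simp: prefix_tuple_def ktuples_def fun_eq_iff)

lemma prefix_tuple_full:
  "S \<in> ktuples n k \<Longrightarrow> prefix_tuple S idx (Suc k) 1 = S"
  by (auto simp: prefix_tuple_def ktuples_def fun_eq_iff not_less_eq)

lemma attack_loss_step:
  fixes f :: "(nat \<Rightarrow> nat set) \<Rightarrow> real" and x :: "nat \<Rightarrow> nat set"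
  assumes sub: "k_submodular n k f" and S: "S \<in> ktuples n k"
    and bij: "bij_betw (idx q) {1..card (S q)} (S q)"
    and \<xi>: "\<forall>i\<in>{1..n}. \<xi> i \<in> {0, 1}"
    and q: "q \<in> {1..k}" and t: "t \<in> {1..card (S q)}"
  defines "P \<equiv> prefix_tuple S idx q" and "i \<equiv> idx q t"
  shows "f (P (Suc t)) - f (strip_attacked x \<xi> (P (Suc t)))
           \<le> f (P t) - f (strip_attacked x \<xi> (P t)) + marg f q i (P t) * \<xi> i * ind x q i"
proof -
  have i_free: "\<And>r. i \<notin> P t r"
    using idx_notin_prefix_tuple[where S=S and idx=idx and q=q, OF bij S q t] unfolding P_def i_def .
  have Pt: "P t \<in> ktuples n k"
    using ktuples_subset[OF S prefix_tuple_subset[where S=S and idx=idx and q=q, OF bij]] t unfolding P_def by simp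
  have "i \<in> S q" unfolding i_def using bij_betw_apply[OF bij t] .
  then have i: "i \<in> {1..n}" using S unfolding ktuples_def by blast
  have P_Suc: "P (Suc t) = (P t)(q := P t q \<union> {i})"
    using prefix_tuple_Suc[where S=S and idx=idx and q=q, OF bij] t unfolding P_def i_def by simp
  show ?thesis
  proof (cases "i \<in> x q \<and> \<xi> i = 1")
    case True
    then have "strip_attacked x \<xi> (P (Suc t)) = strip_attacked x \<xi> (P t)"
      unfolding P_Suc strip_attacked_def by (auto simp: fun_eq_iff)
    then show ?thesis using True unfolding P_Suc by (simp add: marg_def ind_def)
  next
    case False
    then have no_gain: "marg f q i (P t) * \<xi> i * ind x q i = 0" using \<xi> i by (auto simp: ind_def)
    have strip_Suc: "strip_attacked x \<xi> (P (Suc t))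
        = (strip_attacked x \<xi> (P t))(q := strip_attacked x \<xi> (P t) q \<union> {i})"
      using False unfolding P_Suc strip_attacked_def by (auto simp: fun_eq_iff)
    have "marg f q i (P t) \<le> marg f q i (strip_attacked x \<xi> (P t))"
      by (rule k_submodular_marg_antimono[OF sub Pt _ q i i_free]) (auto simp: strip_attacked_def)
    then show ?thesis unfolding no_gain strip_Suc by (simp add: P_Suc marg_def)
  qed
qed

lemma attack_loss_bound:
  fixes f :: "(nat \<Rightarrow> nat set) \<Rightarrow> real" and x :: "nat \<Rightarrow> nat set"
  assumes sub: "k_submodular n k f" and S: "S \<in> ktuples n k"
    and bij: "\<forall>q\<in>{1..k}. bij_betw (idx q) {1..card (S q)} (S q)"
    and \<xi>: "\<forall>i\<in>{1..n}. \<xi> i \<in> {0, 1}"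
  shows "f S - f (strip_attacked x \<xi> S)
           \<le> (\<Sum>q=1..k. \<Sum>t=1..card (S q).
                 marg f q (idx q t) (prefix_tuple S idx q t) * \<xi> (idx q t) * ind x q (idx q t))"
proof -
  define loss where "loss Z = f Z - f (strip_attacked x \<xi> Z)" for Z
  define c where "c q t = marg f q (idx q t) (prefix_tuple S idx q t) * \<xi> (idx q t) * ind x q (idx q t)"
    for q t
  have block: "loss (prefix_tuple S idx q (Suc t)) \<le> loss (prefix_tuple S idx q 1) + (\<Sum>s=1..t. c q s)"
    if q: "q \<in> {1..k}" and "t \<le> card (S q)" for q t
    using that(2)
  proof (induction t)
    case (Suc t)
    then show ?case
      using attack_loss_step[OF sub S _ \<xi> q, of idx "Suc t" x] bij q
      unfolding loss_def c_def by fastforce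
  qed simp
  have "loss (prefix_tuple S idx (Suc m) 1) \<le> (\<Sum>q=1..m. \<Sum>t=1..card (S q). c q t)"
    if "m \<le> k" for m
    using that
  proof (induction m)
    case 0
    show ?case using prefix_tuple_first[OF S] by (simp add: loss_def strip_attacked_def)
  next
    case (Suc m)
    then have q: "Suc m \<in> {1..k}" by simp
    then show ?case
      using Suc block[OF q order.refl] prefix_tuple_block_end[of idx "Suc m" S] bij by simp
  qed
  then show ?thesis using prefix_tuple_full[OF S] unfolding loss_def c_def by fastforce
qed

lemma strip_attacked_feasible:
  assumes S: "S \<in> inner_feas n k D \<xi> y" and \<xi>: "\<forall>i\<in>{1..n}. \<xi> i \<in> {0, 1}"
  shows "strip_attacked x \<xi> S \<in> inner_feas n k D \<xi> x"
proof -
  have Sk: "S \<in> ktuples n k" using S unfolding inner_feas_def by simp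
  have "card (strip_attacked x \<xi> S q) \<le> D q" if "q \<in> {1..k}" for q
  proof -
    have "finite (S q)" using Sk finite_subset[of "S q" "{1..n}"] unfolding ktuples_def by auto
    then have "card (strip_attacked x \<xi> S q) \<le> card (S q)"
      by (auto simp: strip_attacked_def intro: card_mono)
    also have "\<dots> \<le> D q" using S that unfolding inner_feas_def by simp
    finally show ?thesis .
  qed
  moreover have "ind (strip_attacked x \<xi> S) q i \<le> 1 - ind x q i * \<xi> i" if "i \<in> {1..n}" for q i
    using \<xi> that by (cases "\<xi> i = 0") (auto simp: ind_def strip_attacked_def)
  ultimately show ?thesis
    using ktuples_subset[OF Sk] unfolding inner_feas_def by (auto simp: strip_attacked_def)
qed

lemma Qval_ge: "S \<in> inner_feas n k D \<xi> x \<Longrightarrow> f S \<le> Qval n k D \<xi> f x"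
  unfolding Qval_def
  by (rule Max_ge) (auto intro: finite_subset[OF _ finite_ktuples] simp: inner_feas_def)

lemma Qval_optimal:
  assumes "S \<in> inner_feas n k D \<xi> x" "\<forall>S'\<in>inner_feas n k D \<xi> x. f S' \<le> f S"
  shows "Qval n k D \<xi> f x = f S"
  unfolding Qval_def
  using assms by (intro Max_eqI) (auto intro: finite_subset[OF _ finite_ktuples] simp: inner_feas_def)

lemma Qval_attack_bound:
  assumes sub: "k_submodular n k f" and S: "S \<in> inner_feas n k D \<xi> xhat"
    and \<xi>: "\<forall>i\<in>{1..n}. \<xi> i \<in> {0, 1}"
    and bij: "\<forall>q\<in>{1..k}. bij_betw (idx q) {1..card (S q)} (S q)"
  shows "f S \<le> Qval n k D \<xi> f x + (\<Sum>q=1..k. \<Sum>t=1..card (S q).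
           marg f q (idx q t) (prefix_tuple S idx q t) * \<xi> (idx q t) * ind x q (idx q t))"
proof -
  have "f S - f (strip_attacked x \<xi> S) \<le> (\<Sum>q=1..k. \<Sum>t=1..card (S q).
           marg f q (idx q t) (prefix_tuple S idx q t) * \<xi> (idx q t) * ind x q (idx q t))"
    using S by (intro attack_loss_bound[OF sub _ bij \<xi>]) (simp add: inner_feas_def)
  moreover have "f (strip_attacked x \<xi> S) \<le> Qval n k D \<xi> f x"
    by (rule Qval_ge[OF strip_attacked_feasible[OF S \<xi>]])
  ultimately show ?thesis by simp
qed

lemma prob_dists_bounds:
  assumes "p \<in> prob_dists \<Omega>" "finite \<Omega>" "w \<in> \<Omega>"
  shows "0 \<le> p w" "p w \<le> 1"
proof -
  have nonneg: "\<forall>v\<in>\<Omega>. 0 \<le> p v" and total: "(\<Sum>v\<in>\<Omega>. p v) = 1"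
    using assms(1) unfolding prob_dists_def by auto
  show "0 \<le> p w" using nonneg assms(3) by blast
  have "p w \<le> (\<Sum>v\<in>\<Omega>. p v)"
    using nonneg by (intro member_le_sum[OF assms(3) _ assms(2)]) simp
  then show "p w \<le> 1" using total by simp
qed

lemma PhiA_ge:
  assumes "\<PP> \<subseteq> prob_dists \<Omega>" "finite \<Omega>" "p \<in> \<PP>"
  shows "(\<Sum>w\<in>\<Omega>. p w * Q w x) \<le> PhiA \<Omega> \<PP> Q x"
  unfolding PhiA_def
proof (rule cSUP_upper[OF assms(3)])
  have "(\<Sum>w\<in>\<Omega>. p' w * Q w x) \<le> (\<Sum>w\<in>\<Omega>. \<bar>Q w x\<bar>)" if "p' \<in> \<PP>" for p'
  proof (rule sum_mono)
    fix w assume "w \<in> \<Omega>"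
    have p': "p' \<in> prob_dists \<Omega>" using assms(1) that by blast
    have "p' w * Q w x \<le> p' w * \<bar>Q w x\<bar>"
      using prob_dists_bounds(1)[OF p' assms(2) \<open>w \<in> \<Omega>\<close>] by (intro mult_left_mono) simp_all
    also have "\<dots> \<le> \<bar>Q w x\<bar>"
      using prob_dists_bounds[OF p' assms(2) \<open>w \<in> \<Omega>\<close>] by (intro mult_left_le_one_le) simp_all
    finally show "p' w * Q w x \<le> \<bar>Q w x\<bar>" .
  qed
  then show "bdd_above ((\<lambda>p. \<Sum>w\<in>\<Omega>. p w * Q w x) ` \<PP>)" by (rule bdd_aboveI2)
qed

lemma PhiA_le:
  assumes "\<PP> \<noteq> {}" "\<And>p. p \<in> \<PP> \<Longrightarrow> (\<Sum>w\<in>\<Omega>. p w * Q w x) \<le> B"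
  shows "PhiA \<Omega> \<PP> Q x \<le> B"
  unfolding PhiA_def using assms by (rule cSUP_least)

theorem theorem5:
  fixes n k :: nat and A D :: "nat \<Rightarrow> nat" and \<Omega> :: "'w set"
    and \<xi> :: "'w \<Rightarrow> nat \<Rightarrow> real" and f :: "'w \<Rightarrow> (nat \<Rightarrow> nat set) \<Rightarrow> real"
    and \<PP> :: "('w \<Rightarrow> real) set"
    and xhat :: "nat \<Rightarrow> nat set" and Shat :: "'w \<Rightarrow> nat \<Rightarrow> nat set"
    and phat :: "'w \<Rightarrow> real" and idx :: "'w \<Rightarrow> nat \<Rightarrow> nat \<Rightarrow> nat"
    and x :: "nat \<Rightarrow> nat set"
  assumes "n > 0" and "k > 0"
    and "finite \<Omega>"
    and "\<forall>w\<in>\<Omega>. \<forall>i\<in>{1..n}. \<xi> w i \<in> {0, 1}"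
    and "\<forall>w\<in>\<Omega>. k_monotone n k (f w) \<and> k_submodular n k (f w)"
    and "\<PP> \<noteq> {}" and "\<PP> \<subseteq> prob_dists \<Omega>" and "compact \<PP>"
    and "xhat \<in> attack_set n k A"
    and "\<forall>w\<in>\<Omega>. Shat w \<in> inner_feas n k D (\<xi> w) xhat \<and>
           (\<forall>S\<in>inner_feas n k D (\<xi> w) xhat. f w S \<le> f w (Shat w))"
    and "phat \<in> \<PP>"
    and "\<forall>p\<in>\<PP>. (\<Sum>w\<in>\<Omega>. p w * f w (Shat w)) \<le> (\<Sum>w\<in>\<Omega>. phat w * f w (Shat w))"
    and "\<forall>w\<in>\<Omega>. \<forall>q\<in>{1..k}. bij_betw (idx w q) {1..card (Shat w q)} (Shat w q)"
    and "x \<in> attack_set n k A"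
  shows "PhiA \<Omega> \<PP> (\<lambda>w. Qval n k D (\<xi> w) (f w)) x \<ge>
           PhiA \<Omega> \<PP> (\<lambda>w. Qval n k D (\<xi> w) (f w)) xhat
           - (\<Sum>q=1..k. \<Sum>w\<in>\<Omega>. \<Sum>t=1..card (Shat w q).
                phat w
                * marg (f w) q (idx w q t)
                    (\<lambda>r. if r < q then Shat w r else if r = q then idx w q ` {1..<t} else {})
                * \<xi> w (idx w q t) * ind x q (idx w q t))"
proof -
  define Q where "Q w = Qval n k D (\<xi> w) (f w)" for w
  define C where "C w = (\<Sum>q=1..k. \<Sum>t=1..card (Shat w q). marg (f w) q (idx w q t)
      (prefix_tuple (Shat w) (idx w) q t) * \<xi> w (idx w q t) * ind x q (idx w q t))" for w
  have Q_xhat: "Q w xhat = f w (Shat w)" if "w \<in> \<Omega>" for w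
    unfolding Q_def using assms(10) that by (intro Qval_optimal) auto
  have Q_x: "f w (Shat w) \<le> Q w x + C w" if "w \<in> \<Omega>" for w
    unfolding Q_def C_def using assms(4,5,10,13) that by (intro Qval_attack_bound) auto
  have "PhiA \<Omega> \<PP> Q xhat \<le> (\<Sum>w\<in>\<Omega>. phat w * f w (Shat w))"
  proof (rule PhiA_le[OF assms(6)])
    fix p assume "p \<in> \<PP>"
    moreover have "(\<Sum>w\<in>\<Omega>. p w * Q w xhat) = (\<Sum>w\<in>\<Omega>. p w * f w (Shat w))"
      using Q_xhat by (intro sum.cong) simp_all
    ultimately show "(\<Sum>w\<in>\<Omega>. p w * Q w xhat) \<le> (\<Sum>w\<in>\<Omega>. phat w * f w (Shat w))"
      using assms(12) by simp
  qed
  also have "\<dots> \<le> (\<Sum>w\<in>\<Omega>. phat w * Q w x + phat w * C w)"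
  proof (rule sum_mono)
    fix w assume w: "w \<in> \<Omega>"
    have "phat w * f w (Shat w) \<le> phat w * (Q w x + C w)"
      using Q_x[OF w] prob_dists_bounds(1)[OF _ assms(3) w] assms(7,11) by (intro mult_left_mono) auto
    then show "phat w * f w (Shat w) \<le> phat w * Q w x + phat w * C w"
      by (simp add: distrib_left)
  qed
  also have "\<dots> = (\<Sum>w\<in>\<Omega>. phat w * Q w x) + (\<Sum>w\<in>\<Omega>. phat w * C w)"
    by (rule sum.distrib)
  also have "\<dots> \<le> PhiA \<Omega> \<PP> Q x + (\<Sum>w\<in>\<Omega>. phat w * C w)"
    using PhiA_ge[OF assms(7,3,11)] by simp
  finally show ?thesis
    unfolding Q_def C_def prefix_tuple_def by (simp add: sum_distrib_left mult.assoc sum.swap[of _ \<Omega>])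
qed

end
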